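(* Let $0\le p\le q$ be integers and $\ell\ge0$ an integer. Then $$\nu(\ell,[p]\times[q])=\begin{cases}0,&\ell\le p,\\ \ell-p,&p<\ell\le q,\\ 2\ell-p-q,& q<\ell\le p+q,\\ \ell,&\ell>p+q.\end{cases}$$
   Context: Let $c_1,c_2,\dots$ and $s_1,s_2,\dots$ be distinct vertices. $[i]\times[j]$ denotes the set of pairs $\{c_as_b:1\le a\le i,1\le b\le j\}$. For a set $Q$ of pairs $c_as_b$, $\nu(\ell,Q)$ is the matching number of the bipartite graph with sides $\{c_1,\dots,c_\ell\}$, $\{s_1,\dots,s_\ell\}$ and edge set $([\ell]\times[\ell])\setminus Q$. *)

theory Defs
  imports Main
begin

text \<open>Vertices c_a and s_b are encoded by their indices; an edge c_a s_b of the
bipartite graph is encoded as the pair (a, b). Since the two sides are disjoint,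
this encoding is faithful.\<close>

definition rect :: "nat \<Rightarrow> nat \<Rightarrow> (nat \<times> nat) set" where
  "rect i j = {1..i} \<times> {1..j}"

definition is_matching :: "(nat \<times> nat) set \<Rightarrow> bool" where
  "is_matching M \<longleftrightarrow>
     (\<forall>e\<in>M. \<forall>e'\<in>M. (fst e = fst e' \<or> snd e = snd e') \<longrightarrow> e = e')"

definition nu :: "nat \<Rightarrow> (nat \<times> nat) set \<Rightarrow> nat" where
  "nu l Q = Max {card M | M. M \<subseteq> rect l l - Q \<and> is_matching M}"

end

theory Submission
  imports Defs
begin

text \<open>A matching uses each row at most once, so it has at most l edges; its edges in
the rows 1..p lie in the columns q+1..l and its other edges in the rows p+1..l, which
gives the second bound (l - p) + (l - q). Conversely, shifting the rows 1..p up by q,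
the rows p+1..p+q down by p and fixing all later rows is an injection of the positive
integers missing the forbidden rectangle; its graph restricted to the rows that land in
1..l is a matching attaining min l ((l - p) + (l - q)).\<close>

lemma finite_rect [simp]: "finite (rect i j)"
  unfolding rect_def by simp

lemma is_matching_inj_on_fst: "is_matching M \<Longrightarrow> inj_on fst M"
  unfolding is_matching_def inj_on_def by blast

lemma is_matching_inj_on_snd: "is_matching M \<Longrightarrow> inj_on snd M"
  unfolding is_matching_def inj_on_def by blast

lemma card_matching_le_fst:
  assumes "is_matching M" "fst ` M \<subseteq> A" "finite A"
  shows "card M \<le> card A"
proof -
  have "card M = card (fst ` M)"
    using assms(1) by (simp add: card_image is_matching_inj_on_fst)
  also have "\<dots> \<le> card A"
    using assms(2,3) by (rule card_mono[rotated])
  finally show ?thesis .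
qed

lemma card_matching_le_snd:
  assumes "is_matching M" "snd ` M \<subseteq> A" "finite A"
  shows "card M \<le> card A"
proof -
  have "card M = card (snd ` M)"
    using assms(1) by (simp add: card_image is_matching_inj_on_snd)
  also have "\<dots> \<le> card A"
    using assms(2,3) by (rule card_mono[rotated])
  finally show ?thesis .
qed

lemma is_matching_subset: "is_matching M \<Longrightarrow> N \<subseteq> M \<Longrightarrow> is_matching N"
  unfolding is_matching_def by blast

lemma is_matching_graph: "inj_on f S \<Longrightarrow> is_matching ((\<lambda>i. (i, f i)) ` S)"
  unfolding is_matching_def inj_on_def by auto

lemma card_graph: "card ((\<lambda>i. (i, f i)) ` S) = card S"
  by (rule card_image) (simp add: inj_on_def)

lemma nu_eqI:
  assumes "\<And>M. M \<subseteq> rect l l - Q \<Longrightarrow> is_matching M \<Longrightarrow> card M \<le> k"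
    and "M \<subseteq> rect l l - Q" "is_matching M" "card M = k"
  shows "nu l Q = k"
  unfolding nu_def
proof (rule Max_eqI)
  have "{card M | M. M \<subseteq> rect l l - Q \<and> is_matching M} \<subseteq> card ` Pow (rect l l)"
    by blast
  then show "finite {card M | M. M \<subseteq> rect l l - Q \<and> is_matching M}"
    by (rule finite_subset) simp
qed (use assms in blast)+

lemma card_matching_le_rect_compl:
  assumes "M \<subseteq> rect l l - rect p q" "is_matching M"
  shows "card M \<le> min l ((l - p) + (l - q))"
proof -
  define low where "low = {e \<in> M. fst e \<le> p}"
  have fin: "finite M"
    using assms(1) by (rule finite_subset) simp
  have "card M \<le> card {1..l}"
    using assms by (intro card_matching_le_fst) (auto simp: rect_def)
  moreover have "card low \<le> card {q<..l}"
    using assms is_matching_subset[of M low]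
    by (intro card_matching_le_snd) (auto simp: rect_def low_def)
  moreover have "card (M - low) \<le> card {p<..l}"
    using assms is_matching_subset[of M "M - low"]
    by (intro card_matching_le_fst) (auto simp: rect_def low_def)
  moreover have "card M = card low + card (M - low)"
    using fin by (simp add: card_Diff_subset low_def card_mono)
  ultimately show ?thesis
    by simp
qed

lemma large_matching_in_rect_compl:
  obtains M where "M \<subseteq> rect l l - rect p q" "is_matching M"
    "card M = min l ((l - p) + (l - q))"
proof -
  define f where "f i = (if i \<le> p then i + q else if i \<le> p + q then i - p else i)" for i
  define S where "S = {1..min p (l - q)} \<union> {p<..l}"
  define M where "M = (\<lambda>i. (i, f i)) ` S"
  have "M \<subseteq> rect l l - rect p q"
    unfolding M_def S_def f_def rect_def by auto
  moreover have "inj_on f S"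
    unfolding inj_on_def f_def S_def by auto
  then have "is_matching M"
    unfolding M_def by (rule is_matching_graph)
  moreover have "card S = min p (l - q) + (l - p)"
    unfolding S_def by (subst card_Un_disjoint) auto
  then have "card M = min l ((l - p) + (l - q))"
    unfolding M_def card_graph by linarith
  ultimately show ?thesis
    by (rule that)
qed

theorem nu_rect: "nu l (rect p q) = min l ((l - p) + (l - q))"
proof -
  obtain M where M: "M \<subseteq> rect l l - rect p q" "is_matching M"
    "card M = min l ((l - p) + (l - q))"
    by (rule large_matching_in_rect_compl)
  show ?thesis
    by (rule nu_eqI[OF card_matching_le_rect_compl M])
qed

theorem lemma2:
  fixes p q l :: nat
  assumes "p \<le> q"
  shows "nu l (rect p q) =
    (if l \<le> p then 0
     else if l \<le> q then l - p
     else if l \<le> p + q then 2 * l - p - q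
     else l)"
  using assms unfolding nu_rect by auto

end
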